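(* Let $r\in\mathbb{Z}$, $r\neq1$, and $A_r=\left(\frac{1+x(r-1)}{1-x};\ \frac{1}{(1-x)^2},\ \frac{x}{1-x}\right)$. Then every element of the cyclic subgroup $\{A_r^p:p\in\mathbb{Z}\}$ of the group of almost Riordan arrays of first order is a pseudo-involution.
   Context: All matrices are infinite lower-triangular with rows and columns indexed by $n,k\ge0$ and integer entries. $[x^n]h(x)$ denotes the coefficient of $x^n$ in $h$. An almost Riordan array of first order is a triple $(a;g,f)$ of formal power series with $a_0=1$, $g_0=1$, $f_0=0$, $f_1=1$; its associated matrix $M$ is given by $M_{0,0}=a_0$, $M_{0,k}=0$ for $k\ge1$, $M_{n,0}=a_n$ for $n\ge1$, and $M_{n,k}=[x^{n-1}]\,g(x)f(x)^{k-1}$ for $n,k\ge1$. These matrices form a group under matrix multiplication. $I$ is the identity matrix and $\bar I$ is the diagonal matrix with diagonal $(1,-1,1,-1,\dots)$. An element with matrix $M$ is a pseudo-involution if $(M\bar I)^2=I$. *)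

theory Defs
  imports "HOL-Computational_Algebra.Formal_Power_Series"
begin

type_synonym imat = "nat \<Rightarrow> nat \<Rightarrow> int"

definition lower_tri :: "imat \<Rightarrow> bool" where
  "lower_tri M \<longleftrightarrow> (\<forall>n k. n < k \<longrightarrow> M n k = 0)"

text \<open>Product of lower-triangular matrices (the sum is finite for such matrices).\<close>
definition mmul :: "imat \<Rightarrow> imat \<Rightarrow> imat" where
  "mmul M N = (\<lambda>n k. \<Sum>j\<le>n. M n j * N j k)"

definition idm :: imat where
  "idm = (\<lambda>n k. if n = k then 1 else 0)"

definition Ibar :: imat where
  "Ibar = (\<lambda>n k. if n = k then (-1) ^ n else 0)"

fun mpow :: "imat \<Rightarrow> nat \<Rightarrow> imat" where
  "mpow M 0 = idm"
| "mpow M (Suc m) = mmul (mpow M m) M"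

definition minv :: "imat \<Rightarrow> imat" where
  "minv M = (THE B. lower_tri B \<and> mmul M B = idm)"

definition mzpow :: "imat \<Rightarrow> int \<Rightarrow> imat" where
  "mzpow M p = (if 0 \<le> p then mpow M (nat p) else mpow (minv M) (nat (- p)))"

definition ar_matrix :: "int fps \<Rightarrow> int fps \<Rightarrow> int fps \<Rightarrow> imat" where
  "ar_matrix a g f = (\<lambda>n k.
     if n = 0 then (if k = 0 then fps_nth a 0 else 0)
     else if k = 0 then fps_nth a n
     else fps_nth (g * f ^ (k - 1)) (n - 1))"

definition pseudo_involution :: "imat \<Rightarrow> bool" where
  "pseudo_involution M \<longleftrightarrow> mmul (mmul M Ibar) (mmul M Ibar) = idm"

definition geom :: "int fps" where
  "geom = Abs_fps (\<lambda>_. 1)"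

definition A_r :: "int \<Rightarrow> imat" where
  "A_r r = ar_matrix ((1 + fps_const (r - 1) * fps_X) * geom) (geom ^ 2) (fps_X * geom)"

end

theory Submission
  imports Defs
begin

text \<open>
  The powers of \<open>A_r\<close> have a closed form: \<open>A_r ^ p\<close> is the matrix \<open>P p\<close> with first
  column \<open>1, r p, r p^2, ...\<close> and entries \<open>C(n,k) p^(n-k)\<close> in the columns \<open>k \<ge> 1\<close>.
  The identity \<open>C(n,j) C(j,k) = C(n,k) C(n-k,j-k)\<close> and the binomial theorem give the group
  law \<open>P p * P q = P (p + q)\<close>, and conjugation by \<open>Ibar\<close> multiplies entry \<open>(n,k)\<close> by
  \<open>(-1)^(n+k)\<close>, which turns \<open>P p\<close> into \<open>P (-p)\<close>. Hence
  \<open>(P p * Ibar)^2 = P p * (Ibar * P p * Ibar) = P p * P (-p) = I\<close>.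
\<close>

lemma mmul_assoc:
  assumes "lower_tri Y"
  shows "mmul (mmul X Y) Z = mmul X (mmul Y Z)"
proof (intro ext)
  fix n k
  have "mmul (mmul X Y) Z n k = (\<Sum>j\<le>n. \<Sum>i\<le>n. X n i * Y i j * Z j k)"
    by (simp add: mmul_def sum_distrib_right)
  also have "\<dots> = (\<Sum>i\<le>n. \<Sum>j\<le>n. X n i * Y i j * Z j k)"
    by (rule sum.swap)
  also have "\<dots> = (\<Sum>i\<le>n. \<Sum>j\<le>i. X n i * Y i j * Z j k)"
  proof (rule sum.cong)
    fix i assume "i \<in> {..n}"
    then show "(\<Sum>j\<le>n. X n i * Y i j * Z j k) = (\<Sum>j\<le>i. X n i * Y i j * Z j k)"
      by (intro sum.mono_neutral_right) (use assms in \<open>auto simp: lower_tri_def\<close>)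
  qed simp
  also have "\<dots> = mmul X (mmul Y Z) n k"
    by (simp add: mmul_def sum_distrib_left mult.assoc)
  finally show "mmul (mmul X Y) Z n k = mmul X (mmul Y Z) n k" .
qed

lemma mmul_idm_left: "mmul idm Z = Z"
proof (intro ext)
  fix n k
  have "mmul idm Z n k = (\<Sum>j\<le>n. if n = j then Z n k else 0)"
    unfolding mmul_def idm_def by (rule sum.cong) auto
  then show "mmul idm Z n k = Z n k" by simp
qed

lemma mmul_diagonal_right:
  assumes "lower_tri Z"
  shows "mmul Z (\<lambda>n k. if n = k then d n else 0) = (\<lambda>n k. Z n k * d k)"
proof (intro ext)
  fix n k
  have "mmul Z (\<lambda>n k. if n = k then d n else 0) n k = (\<Sum>j\<le>n. if j = k then Z n k * d k else 0)"
    unfolding mmul_def by (rule sum.cong) auto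
  also have "\<dots> = Z n k * d k"
    using assms by (auto simp: lower_tri_def)
  finally show "mmul Z (\<lambda>n k. if n = k then d n else 0) n k = Z n k * d k" .
qed

lemma mmul_idm_right: "lower_tri Z \<Longrightarrow> mmul Z idm = Z"
  using mmul_diagonal_right[of Z "\<lambda>_. 1"] unfolding idm_def by simp

lemma minv_eqI:
  assumes "lower_tri M" "lower_tri B" "mmul M B = idm" "mmul B M = idm"
  shows "minv M = B"
  unfolding minv_def
proof (rule the_equality)
  fix C assume C: "lower_tri C \<and> mmul M C = idm"
  have "C = mmul (mmul B M) C" by (simp add: assms(4) mmul_idm_left)
  also have "\<dots> = B" using C assms(1,2) by (simp add: mmul_assoc mmul_idm_right)
  finally show "C = B" .
qed (use assms in blast)

lemma mzpow_one_parameter_group: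
  assumes group_law: "\<And>p q. F (p + q) = mmul (F p) (F q)"
    and F_0: "F 0 = idm" and lower: "\<And>p. lower_tri (F p)"
  shows "mzpow (F 1) p = F p"
proof -
  have mpow_F: "mpow (F s) m = F (int m * s)" for s m
    by (induction m) (simp_all add: F_0 group_law[symmetric] algebra_simps)
  have "minv (F 1) = F (-1)"
    by (rule minv_eqI) (simp_all add: lower F_0 flip: group_law)
  then show ?thesis
    by (simp add: mzpow_def mpow_F)
qed

lemma pseudo_involution_iff:
  assumes "lower_tri M"
  shows "pseudo_involution M \<longleftrightarrow> mmul M (\<lambda>n k. (-1) ^ (n + k) * M n k) = idm"
proof -
  have "mmul M Ibar = (\<lambda>n k. M n k * (-1) ^ k)"
    using mmul_diagonal_right[OF assms, of "\<lambda>n. (-1) ^ n"] by (simp add: Ibar_def)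
  then have "mmul (mmul M Ibar) (mmul M Ibar) = mmul M (\<lambda>n k. (-1) ^ (n + k) * M n k)"
    by (intro ext) (simp add: mmul_def power_add mult_ac)
  then show ?thesis
    by (simp add: pseudo_involution_def)
qed

lemma sum_choose_power_choose_power:
  fixes p q :: int
  shows "(\<Sum>j\<le>n. (of_nat (n choose j) * p ^ (n - j)) * (of_nat (j choose k) * q ^ (j - k)))
         = of_nat (n choose k) * (p + q) ^ (n - k)"
proof (cases "k \<le> n")
  case False
  then have "\<forall>j\<in>{..n}. (of_nat (n choose j) * p ^ (n - j)) * (of_nat (j choose k) * q ^ (j - k)) = (0::int)"
    by auto
  then show ?thesis using False by (simp only: sum.neutral) simp
next
  case True
  define f where "f j = (of_nat (n choose j) * p ^ (n - j)) * (of_nat (j choose k) * q ^ (j - k))" for j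
  have "(\<Sum>j\<le>n. f j) = (\<Sum>j\<in>{k..n}. f j)"
    by (rule sum.mono_neutral_right) (auto simp: f_def)
  also have "\<dots> = (\<Sum>i=0..n-k. f (i + k))"
    using sum.shift_bounds_cl_nat_ivl[of f 0 k "n - k"] True by simp
  also have "\<dots> = (\<Sum>i=0..n-k. of_nat (n choose k) * (of_nat ((n - k) choose i) * q ^ i * p ^ (n - k - i)))"
  proof (rule sum.cong)
    fix i assume i: "i \<in> {0..n-k}"
    have "(n choose (i + k)) * ((i + k) choose k) = (n choose k) * ((n - k) choose i)"
      using choose_mult[of k "i + k" n] i True by simp
    then have "(of_nat (n choose (i + k)) :: int) * of_nat ((i + k) choose k)
               = of_nat (n choose k) * of_nat ((n - k) choose i)"
      by (metis of_nat_mult)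
    moreover have "f (i + k) = (of_nat (n choose (i + k)) * of_nat ((i + k) choose k)) * q ^ i * p ^ (n - k - i)"
      unfolding f_def using i by (simp add: algebra_simps)
    ultimately show "f (i + k) = of_nat (n choose k) * (of_nat ((n - k) choose i) * q ^ i * p ^ (n - k - i))"
      by simp
  qed simp
  also have "\<dots> = of_nat (n choose k) * (q + p) ^ (n - k)"
    by (simp add: binomial_ring sum_distrib_left atLeast0AtMost)
  finally show ?thesis by (simp add: f_def add.commute)
qed

text \<open>The matrix of the almost Riordan array
  \<open>((1 + (r-1) p x)/(1 - p x); 1/(1 - p x)^2, x/(1 - p x))\<close>, i.e. of \<open>A_r ^ p\<close>.\<close>
definition ar_pascal :: "int \<Rightarrow> int \<Rightarrow> imat" where
  "ar_pascal r p = (\<lambda>n k. if k = 0 then (if n = 0 then 1 else r * p ^ n)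
                           else of_nat (n choose k) * p ^ (n - k))"

lemma lower_tri_ar_pascal: "lower_tri (ar_pascal r p)"
  unfolding lower_tri_def ar_pascal_def by auto

lemma ar_pascal_0: "ar_pascal r 0 = idm"
  by (intro ext) (auto simp: ar_pascal_def idm_def)

lemma ar_pascal_mult: "mmul (ar_pascal r p) (ar_pascal r q) = ar_pascal r (p + q)"
proof (intro ext)
  fix n k :: nat
  consider "n = 0" | "n \<noteq> 0" "k = 0" | "k \<noteq> 0" by blast
  then show "mmul (ar_pascal r p) (ar_pascal r q) n k = ar_pascal r (p + q) n k"
  proof cases
    case 1
    then show ?thesis by (simp add: mmul_def ar_pascal_def)
  next
    case 2
    have "mmul (ar_pascal r p) (ar_pascal r q) n k = (\<Sum>j\<le>n. r * (of_nat (n choose j) * q ^ j * p ^ (n - j)))"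
      unfolding mmul_def by (rule sum.cong) (use 2 in \<open>auto simp: ar_pascal_def\<close>)
    also have "\<dots> = r * (q + p) ^ n"
      by (simp add: binomial_ring sum_distrib_left)
    finally show ?thesis using 2 by (simp add: ar_pascal_def add.commute)
  next
    case 3
    have "mmul (ar_pascal r p) (ar_pascal r q) n k
          = (\<Sum>j\<le>n. (of_nat (n choose j) * p ^ (n - j)) * (of_nat (j choose k) * q ^ (j - k)))"
      unfolding mmul_def by (rule sum.cong) (use 3 in \<open>auto simp: ar_pascal_def\<close>)
    then show ?thesis
      using 3 by (simp add: sum_choose_power_choose_power ar_pascal_def)
  qed
qed

lemma neg_one_power_add_eq_diff:
  assumes "k \<le> n"
  shows "(-1 :: 'a :: ring_1) ^ (n + k) = (-1) ^ (n - k)"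
proof -
  have "n + k = (n - k) + 2 * k" using assms by simp
  then show ?thesis by (simp only: power_add power_mult) simp
qed

lemma ar_pascal_sign_twist: "(-1) ^ (n + k) * ar_pascal r p n k = ar_pascal r (-p) n k"
proof (cases "k \<le> n")
  case True
  then show ?thesis
    by (auto simp: ar_pascal_def neg_one_power_add_eq_diff power_minus[of p])
next
  case False
  then show ?thesis by (simp add: ar_pascal_def)
qed

lemma geom_nth: "fps_nth geom n = 1"
  by (simp add: geom_def)

lemma geom_mult_nth: "fps_nth (geom * F) m = (\<Sum>i\<le>m. fps_nth F i)"
  by (simp only: mult.commute[of geom] fps_mult_nth) (simp add: geom_def atLeast0AtMost)

lemma geom_power_nth: "fps_nth (geom ^ Suc s) m = of_nat ((s + m) choose m)"
proof (induction s arbitrary: m)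
  case 0
  then show ?case by (simp add: geom_def)
next
  case (Suc s)
  have "fps_nth (geom ^ Suc (Suc s)) m = (\<Sum>i\<le>m. of_nat ((s + i) choose i))"
    by (simp only: power_Suc[of geom "Suc s"] geom_mult_nth Suc)
  also have "\<dots> = of_nat (Suc s + m choose m)"
    by (simp only: of_nat_sum[symmetric] sum_choose_lower) simp
  finally show ?case .
qed

lemma A_r_column_nth:
  assumes "0 < k" "0 < n"
  shows "fps_nth (geom ^ 2 * (fps_X * geom) ^ (k - 1)) (n - 1) = of_nat (n choose k)"
proof -
  have "geom ^ 2 * (fps_X * geom) ^ (k - 1) = fps_X ^ (k - 1) * geom ^ Suc k"
    using assms by (simp add: power_mult_distrib mult_ac flip: power_add)
  then have "fps_nth (geom ^ 2 * (fps_X * geom) ^ (k - 1)) (n - 1)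
             = (if n < k then 0 else fps_nth (geom ^ Suc k) (n - k))"
    using assms by (auto simp add: fps_X_power_mult_nth simp del: power_Suc)
  also have "\<dots> = of_nat (n choose k)"
    using geom_power_nth[of k "n - k"] binomial_symmetric[of k n] by auto
  finally show ?thesis .
qed

lemma A_r_eq_ar_pascal: "A_r r = ar_pascal r 1"
proof -
  have first_column: "fps_nth ((1 + fps_const (r - 1) * fps_X) * geom) n = (if n = 0 then 1 else r)" for n
    by (simp add: distrib_right mult.assoc geom_def)
  show ?thesis
  proof (intro ext)
    fix n k :: nat
    show "A_r r n k = ar_pascal r 1 n k"
      using A_r_column_nth[of k n] by (simp add: A_r_def ar_matrix_def ar_pascal_def first_column geom_nth)
  qed
qed

theorem mainTheorem4:
  fixes r :: int and p :: int
  assumes "r \<noteq> 1"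
  shows "pseudo_involution (mzpow (A_r r) p)"
proof -
  have "mzpow (A_r r) p = ar_pascal r p"
    unfolding A_r_eq_ar_pascal
    by (rule mzpow_one_parameter_group) (simp_all add: ar_pascal_mult ar_pascal_0 lower_tri_ar_pascal)
  moreover have "mmul (ar_pascal r p) (\<lambda>n k. (-1) ^ (n + k) * ar_pascal r p n k) = idm"
    by (simp add: ar_pascal_sign_twist ar_pascal_mult ar_pascal_0)
  ultimately show ?thesis
    by (simp add: pseudo_involution_iff lower_tri_ar_pascal)
qed

end
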